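(* Let $p\in\mathcal C^2(\mathbb R)$ with $0<a\le p(t)\le b$ for all $t$ and $\dot p,\ddot p$ bounded. Suppose there are $\tilde t_1<\tilde t_2$ such that $\dot p$ attains its maximum $\sup_{t\in\mathbb R}\dot p(t)$ at both $\tilde t_1$ and $\tilde t_2$, and $p(\tilde t_1)>p(\tilde t_2)$. Then the ping-pong map $(t_0,v_0)\mapsto(t_1,v_1)$ on $\mathbb R\times(v_*,\infty)$ is not injective: there exist two distinct points with the same image.
   Context: Ping-pong map for the forcing $p$: let $v_*=2\max\{\sup_t\dot p(t),0\}$. For $(t_0,v_0)\in\mathbb R\times(v_*,\infty)$, let $\tilde t$ be the unique solution of $(\tilde t-t_0)v_0=p(\tilde t)$, and set $v_1=v_0-2\dot p(\tilde t)$, $t_1=\tilde t+p(\tilde t)/v_1$. *)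

theory Defs
  imports "HOL-Analysis.Analysis"
begin

definition vstar :: "(real \<Rightarrow> real) \<Rightarrow> real" where
  "vstar dp = 2 * max (Sup (range dp)) 0"

definition impact_time :: "(real \<Rightarrow> real) \<Rightarrow> real \<Rightarrow> real \<Rightarrow> real" where
  "impact_time p t0 v0 = (THE t. (t - t0) * v0 = p t)"

definition pingpong :: "(real \<Rightarrow> real) \<Rightarrow> (real \<Rightarrow> real) \<Rightarrow> real \<times> real \<Rightarrow> real \<times> real" where
  "pingpong p dp z =
     (let t0 = fst z; v0 = snd z;
          tt = impact_time p t0 v0;
          v1 = v0 - 2 * dp tt
      in (tt + p tt / v1, v1))"

end

theory Submission
  imports Defs
begin

text \<open>Take \<open>v\<^sub>0 = w + 2 sup p'\<close> with \<open>w = (p(s\<^sub>1) - p(s\<^sub>2)) / (s\<^sub>2 - s\<^sub>1) > 0\<close>, and launch the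
  ball from the two points \<open>(s\<^sub>i - p(s\<^sub>i)/v\<^sub>0, v\<^sub>0)\<close>, timed to hit the wall at \<open>s\<^sub>i\<close>. Since \<open>v\<^sub>0\<close>
  exceeds every \<open>p'(t)\<close>, these impact times are the unique ones. Both returns have speed
  \<open>v\<^sub>0 - 2 sup p' = w\<close>, and \<open>w\<close> is chosen exactly so that \<open>s\<^sub>1 + p(s\<^sub>1)/w = s\<^sub>2 + p(s\<^sub>2)/w\<close>.
  Boundedness of \<open>p\<close> forces \<open>sup p' \<ge> 0\<close>.\<close>

lemma Sup_derivative_nonneg:
  fixes p dp :: "real \<Rightarrow> real"
  assumes dp: "\<And>t. (p has_real_derivative dp t) (at t)"
    and dp_bdd: "bdd_above (range dp)"
    and p_bdd: "bounded (range p)"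
  shows "0 \<le> Sup (range dp)"
proof (rule ccontr)
  define M where "M = Sup (range dp)"
  assume "\<not> 0 \<le> Sup (range dp)"
  then have M_neg: "M < 0" by (simp add: M_def)
  obtain B where B: "\<And>t. \<bar>p t\<bar> \<le> B"
    using p_bdd by (auto simp: bounded_real)
  define T where "T = (2 * B + 1) / - M"
  have T_pos: "0 < T"
    unfolding T_def using M_neg B[of 0] by (simp add: divide_pos_neg)
  obtain z where z: "p T - p 0 = T * dp z"
    using MVT2[of 0 T p dp] T_pos dp by auto
  have "dp z \<le> M"
    unfolding M_def using dp_bdd by (auto intro: cSup_upper)
  then have "p T - p 0 \<le> T * M"
    using z T_pos by (simp add: mult_left_mono)
  also have "T * M = - (2 * B + 1)"
    unfolding T_def using M_neg by (simp add: field_simps)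
  finally show False
    using B[of 0] B[of T] by linarith
qed

lemma impact_time_eqI:
  fixes p dp :: "real \<Rightarrow> real"
  assumes dp: "\<And>t. (p has_real_derivative dp t) (at t)"
    and slow: "\<And>t. dp t < v0"
    and hit: "(s - t0) * v0 = p s"
  shows "impact_time p t0 v0 = s"
  unfolding impact_time_def
proof (rule the_equality)
  define g where "g t = (t - t0) * v0 - p t" for t
  have g_deriv: "(g has_real_derivative v0 - dp t) (at t)" for t
    unfolding g_def by (auto intro!: derivative_eq_intros dp)
  have g_mono: "g x < g y" if "x < y" for x y
    using that by (rule DERIV_pos_imp_increasing) (use g_deriv slow in force)
  fix t
  assume "(t - t0) * v0 = p t"
  then have "g t = g s"
    using hit by (simp add: g_def)
  then show "t = s"
    using g_mono[of t s] g_mono[of s t] by (cases t s rule: linorder_cases) auto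
qed (fact hit)

lemma pingpong_launch:
  fixes p dp :: "real \<Rightarrow> real"
  assumes dp: "\<And>t. (p has_real_derivative dp t) (at t)"
    and slow: "\<And>t. dp t < v0"
    and v0_pos: "0 < v0"
  shows "pingpong p dp (s - p s / v0, v0) = (s + p s / (v0 - 2 * dp s), v0 - 2 * dp s)"
proof -
  have "impact_time p (s - p s / v0) v0 = s"
    using v0_pos by (intro impact_time_eqI[OF dp slow]) simp
  then show ?thesis
    by (simp add: pingpong_def Let_def)
qed

theorem mainTheorem8:
  fixes p dp ddp :: "real \<Rightarrow> real" and a b s1 s2 :: real
  assumes dp: "\<And>t. (p has_real_derivative dp t) (at t)"
    and ddp: "\<And>t. (dp has_real_derivative ddp t) (at t)"
    and ddp_cont: "continuous_on UNIV ddp"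
    and a_pos: "0 < a"
    and p_bounds: "\<And>t. a \<le> p t \<and> p t \<le> b"
    and dp_bdd: "bounded (range dp)"
    and ddp_bdd: "bounded (range ddp)"
    and s12: "s1 < s2"
    and max1: "dp s1 = Sup (range dp)"
    and max2: "dp s2 = Sup (range dp)"
    and p_gt: "p s1 > p s2"
  shows "\<exists>z1 z2. z1 \<in> UNIV \<times> {vstar dp<..} \<and> z2 \<in> UNIV \<times> {vstar dp<..} \<and>
           z1 \<noteq> z2 \<and> pingpong p dp z1 = pingpong p dp z2"
proof -
  define M where "M = Sup (range dp)"
  define w where "w = (p s1 - p s2) / (s2 - s1)"
  define v0 where "v0 = w + 2 * M"
  have p_bdd: "bounded (range p)"
    unfolding bounded_real using p_bounds a_pos by (metis abs_of_pos less_le_trans imageE)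
  have M_nonneg: "0 \<le> M"
    unfolding M_def using dp_bdd p_bdd by (intro Sup_derivative_nonneg[OF dp]) (auto intro: bounded_imp_bdd_above)
  have w_pos: "0 < w" and v0_gt: "vstar dp < v0"
    using s12 p_gt M_nonneg by (auto simp: w_def v0_def vstar_def M_def)
  have "dp t \<le> M" for t
    unfolding M_def using dp_bdd by (auto intro: cSup_upper bounded_imp_bdd_above)
  then have slow: "dp t < v0" for t
    using w_pos M_nonneg by (smt (verit) v0_def)
  have launch: "pingpong p dp (s - p s / v0, v0) = (s + p s / w, w)" if "dp s = M" for s
    using pingpong_launch[OF dp slow, of s] that w_pos M_nonneg by (simp add: v0_def)
  have "s1 + p s1 / w = s2 + p s2 / w"
    using s12 p_gt by (simp add: w_def field_simps)
  moreover have "s1 - p s1 / v0 < s2 - p s2 / v0"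
  proof -
    have "p s2 / v0 < p s1 / v0"
      using p_gt w_pos M_nonneg by (simp add: v0_def divide_strict_right_mono)
    then show ?thesis
      using s12 by linarith
  qed
  ultimately show ?thesis
    using v0_gt launch[of s1] launch[of s2] max1 max2
    by (intro exI[of _ "(s1 - p s1 / v0, v0)"] exI[of _ "(s2 - p s2 / v0, v0)"]) (simp add: M_def)
qed

end
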